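(* Let $m\in[0,1]$, $n=\sqrt{1-m^2}$, $k\in[-\pi,\pi]$ (with $(k,m)\neq(0,0)$) and $t\in\mathbb{R}$. Define $$\omega=\omega(k,m)=\arccos\big(n\cos k\big)\in[0,\pi],\qquad \omega_{\rm D}=\sqrt{k^2+m^2},$$ $$v=\partial_k\omega=\frac{n\sin k}{\sin\omega},\qquad v_{\rm D}=\frac{k}{\sqrt{k^2+m^2}},$$ the $2\times2$ Hermitian matrices $$H(k)=\frac{\omega}{\sin\omega}\begin{pmatrix}-n\sin k & m\\ m & n\sin k\end{pmatrix},\qquad H_{\rm D}(k)=\begin{pmatrix}-k & m\\ m & k\end{pmatrix},$$ and the unitaries $U^t(k)=\exp(-iH(k)t)$, $U^t_{\rm D}(k)=\exp(-iH_{\rm D}(k)t)$, and $V(k,t)=U^t_{\rm D}(k)\,U^t(k)^\dagger$. If $e^{i\mu}$ (with $\mu=\mu(k,m,t)\in\mathbb{R}$) is an eigenvalue of $V(k,t)$, then $$\cos\mu\ \ge\ \cos(\alpha t)-\beta,$$ where $$\alpha=\alpha(k,m):=\omega_{\rm D}-\omega,\qquad \beta=\beta(k,m):=1-v\,v_{\rm D}-\sqrt{(1-v^2)(1-v_{\rm D}^2)}.$$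
   Context: $H(k)$ is the momentum-space effective Hamiltonian of the one-dimensional Dirac quantum cellular automaton (with $\omega$ its dispersion relation and $v$ its group velocity), and $H_{\rm D}(k)$ is the one-dimensional Dirac Hamiltonian in Planck units with $\hbar=c=1$. *)

theory Defs
  imports Complex_Main "Jordan_Normal_Form.Schur_Decomposition"
begin

definition mat_exp :: "complex mat \<Rightarrow> complex mat" where
  "mat_exp A = mat (dim_row A) (dim_col A)
     (\<lambda>(i,j). (\<Sum>n. (A ^\<^sub>m n) $$ (i,j) / of_nat (fact n)))"

definition mat2 :: "complex \<Rightarrow> complex \<Rightarrow> complex \<Rightarrow> complex \<Rightarrow> complex mat" where
  "mat2 a b c d = mat_of_rows_list 2 [[a, b], [c, d]]"

definition qca_n :: "real \<Rightarrow> real" where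
  "qca_n m = sqrt (1 - m\<^sup>2)"

definition qca_omega :: "real \<Rightarrow> real \<Rightarrow> real" where
  "qca_omega k m = arccos (qca_n m * cos k)"

definition dirac_omega :: "real \<Rightarrow> real \<Rightarrow> real" where
  "dirac_omega k m = sqrt (k\<^sup>2 + m\<^sup>2)"

definition qca_v :: "real \<Rightarrow> real \<Rightarrow> real" where
  "qca_v k m = qca_n m * sin k / sin (qca_omega k m)"

definition dirac_v :: "real \<Rightarrow> real \<Rightarrow> real" where
  "dirac_v k m = k / sqrt (k\<^sup>2 + m\<^sup>2)"

definition qca_H :: "real \<Rightarrow> real \<Rightarrow> complex mat" where
  "qca_H k m = (complex_of_real (qca_omega k m / sin (qca_omega k m))) \<cdot>\<^sub>m
     mat2 (- (qca_n m * sin k)) m m (qca_n m * sin k)"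

definition dirac_H :: "real \<Rightarrow> real \<Rightarrow> complex mat" where
  "dirac_H k m = mat2 (- k) m m k"

definition qca_U :: "real \<Rightarrow> real \<Rightarrow> real \<Rightarrow> complex mat" where
  "qca_U k m t = mat_exp ((- \<i> * complex_of_real t) \<cdot>\<^sub>m qca_H k m)"

definition dirac_U :: "real \<Rightarrow> real \<Rightarrow> real \<Rightarrow> complex mat" where
  "dirac_U k m t = mat_exp ((- \<i> * complex_of_real t) \<cdot>\<^sub>m dirac_H k m)"

definition V_mat :: "real \<Rightarrow> real \<Rightarrow> real \<Rightarrow> complex mat" where
  "V_mat k m t = dirac_U k m t * mat_adjoint (qca_U k m t)"

definition alpha :: "real \<Rightarrow> real \<Rightarrow> real" where
  "alpha k m = dirac_omega k m - qca_omega k m"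

definition beta :: "real \<Rightarrow> real \<Rightarrow> real" where
  "beta k m = 1 - qca_v k m * dirac_v k m
     - sqrt ((1 - (qca_v k m)\<^sup>2) * (1 - (dirac_v k m)\<^sup>2))"

end

theory Submission
  imports Defs
begin

text \<open>Both Hamiltonians have the form \<open>w (p \<sigma>\<^sub>z + q \<sigma>\<^sub>x)\<close> with \<open>(p, q)\<close> a unit vector:
  \<open>(-v, m / sin \<omega>)\<close> for the automaton and \<open>(-v\<^sub>D, m / \<omega>\<^sub>D)\<close> for the Dirac equation.
  Since \<open>(p \<sigma>\<^sub>z + q \<sigma>\<^sub>x)\<^sup>2 = 1\<close>, each evolution is \<open>cos (w t) - \<i> sin (w t) (p \<sigma>\<^sub>z + q \<sigma>\<^sub>x)\<close>,
  so \<open>V\<close> has determinant 1 and an eigenvalue \<open>cis \<mu>\<close> satisfies \<open>2 cos \<mu> = tr V\<close>, i.e.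
  \<open>cos \<mu> = cos (\<omega>\<^sub>D t) cos (\<omega> t) + sin (\<omega>\<^sub>D t) sin (\<omega> t) g\<close> with \<open>g\<close> the inner product of the
  two unit vectors. Moreover \<open>\<beta> = 1 - g\<close>, and \<open>cos (\<alpha> t) = cos (\<omega>\<^sub>D t) cos (\<omega> t) + sin (\<omega>\<^sub>D t) sin (\<omega> t)\<close>,
  so the claim is \<open>(1 - g) (1 - sin (\<omega>\<^sub>D t) sin (\<omega> t)) \<ge> 0\<close>.\<close>

lemma dim_mat2 [simp]: "dim_row (mat2 a b c d) = 2" "dim_col (mat2 a b c d) = 2"
  by (auto simp: mat2_def mat_of_rows_list_def)

lemma mat2_carrier_mat: "mat2 a b c d \<in> carrier_mat 2 2"
  unfolding carrier_mat_def by simp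

lemma index_mat2 [simp]:
  "mat2 a b c d $$ (0,0) = a" "mat2 a b c d $$ (0,Suc 0) = b"
  "mat2 a b c d $$ (Suc 0,0) = c" "mat2 a b c d $$ (Suc 0,Suc 0) = d"
  by (auto simp: mat2_def mat_of_rows_list_def)

lemma mat2_eqI:
  assumes "M \<in> carrier_mat 2 2" "M $$ (0,0) = a" "M $$ (0,1) = b" "M $$ (1,0) = c" "M $$ (1,1) = d"
  shows "M = mat2 a b c d"
proof (rule eq_matI)
  fix i j assume "i < dim_row (mat2 a b c d)" "j < dim_col (mat2 a b c d)"
  then show "M $$ (i,j) = mat2 a b c d $$ (i,j)"
    using assms by (auto simp: less_2_cases_iff)
qed (use assms in auto)

lemma sum_upt_2: "(\<Sum>i = 0..<2. f i) = f 0 + f (Suc 0)"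
  by (simp add: eval_nat_numeral)

lemma mat2_mult:
  "mat2 a b c d * mat2 a' b' c' d' = mat2 (a*a' + b*c') (a*b' + b*d') (c*a' + d*c') (c*b' + d*d')"
  by (rule mat2_eqI) (auto simp: mat2_carrier_mat scalar_prod_def row_def col_def sum_upt_2)

lemma one_mat_2: "1\<^sub>m 2 = mat2 1 0 0 1"
  by (rule mat2_eqI) auto

lemma smult_mat2: "r \<cdot>\<^sub>m mat2 a b c d = mat2 (r*a) (r*b) (r*c) (r*d)"
  by (rule mat2_eqI) (auto simp: mat2_carrier_mat)

lemma add_mat2: "mat2 a b c d + mat2 a' b' c' d' = mat2 (a+a') (b+b') (c+c') (d+d')"
  by (rule mat2_eqI) (auto simp: mat2_carrier_mat)

lemma mat_adjoint_mat2: "mat_adjoint (mat2 a b c d) = mat2 (cnj a) (cnj c) (cnj b) (cnj d)"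
  by (rule mat2_eqI) (auto simp: mat_adjoint_def mat_of_rows_def mat_of_rows_carrier)

lemma eigenvalue_mat2:
  assumes "eigenvalue (mat2 a b c d) l"
  shows "l\<^sup>2 - (a + d) * l + (a*d - b*c) = 0"
proof -
  obtain v where v: "v \<in> carrier_vec 2" "v \<noteq> 0\<^sub>v 2" "mat2 a b c d *\<^sub>v v = l \<cdot>\<^sub>v v"
    using assms unfolding eigenvalue_def eigenvector_def by auto
  have "(mat2 a b c d *\<^sub>v v) $ i = (l \<cdot>\<^sub>v v) $ i" for i
    using v(3) by simp
  from this[of 0] this[of 1] v(1)
  have eq0: "(a - l) * v$0 + b * v$1 = 0" and eq1: "c * v$0 + (d - l) * v$1 = 0"
    by (auto simp: scalar_prod_def row_def sum_upt_2 algebra_simps)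
  define \<chi> where "\<chi> = (a - l) * (d - l) - b * c"
  have "\<chi> * v$0 = (d - l) * ((a - l) * v$0 + b * v$1) - b * (c * v$0 + (d - l) * v$1)"
   and "\<chi> * v$1 = (a - l) * (c * v$0 + (d - l) * v$1) - c * ((a - l) * v$0 + b * v$1)"
    unfolding \<chi>_def by (simp_all add: algebra_simps)
  then have "\<chi> * v$0 = 0" "\<chi> * v$1 = 0"
    using eq0 eq1 by simp_all
  moreover have "v$0 \<noteq> 0 \<or> v$1 \<noteq> 0"
  proof (rule ccontr)
    assume "\<not> (v$0 \<noteq> 0 \<or> v$1 \<noteq> 0)"
    then have "v = 0\<^sub>v 2"
      using v(1) by (intro eq_vecI) (auto simp: less_2_cases_iff)
    with v(2) show False by simp
  qed
  ultimately have "\<chi> = 0" by auto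
  then show ?thesis
    unfolding \<chi>_def by (simp add: power2_eq_square algebra_simps)
qed

lemma eigenvalue_mat2_mult:
  assumes "eigenvalue (mat2 a b c d * mat2 a' b' c' d') l"
  shows "l\<^sup>2 - (a*a' + b*c' + c*b' + d*d') * l + (a*d - b*c) * (a'*d' - b'*c') = 0"
  using eigenvalue_mat2[OF assms[unfolded mat2_mult]] by (simp add: algebra_simps)

lemma cis_root_of_reciprocal_quadratic:
  assumes "(cis \<mu>)\<^sup>2 - s * cis \<mu> + 1 = 0"
  shows "s = 2 * cos \<mu>"
proof -
  have "s = cis \<mu> + cis (- \<mu>)"
    using arg_cong[OF assms, of "\<lambda>z. z * cis (- \<mu>)"]
    by (simp add: power2_eq_square algebra_simps cis_mult)
  also have "\<dots> = 2 * cos \<mu>"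
    by (simp add: complex_eq_iff)
  finally show ?thesis .
qed

lemma smult_smult_mat: "a \<cdot>\<^sub>m (b \<cdot>\<^sub>m A) = (a * b :: 'a :: semigroup_mult) \<cdot>\<^sub>m A"
  by (rule eq_matI) (auto simp: mult.assoc)

lemma pow_smult_involution:
  fixes A :: "'a :: comm_ring_1 mat"
  assumes A: "A \<in> carrier_mat n n" and inv: "A * A = 1\<^sub>m n"
  shows "(c \<cdot>\<^sub>m A) ^\<^sub>m j = c ^ j \<cdot>\<^sub>m (if even j then 1\<^sub>m n else A)"
proof (induction j)
  case 0
  show ?case using A by auto
next
  case (Suc j)
  have "(c \<cdot>\<^sub>m A) ^\<^sub>m Suc j = c ^ j \<cdot>\<^sub>m (if even j then 1\<^sub>m n else A) * (c \<cdot>\<^sub>m A)"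
    by (simp add: Suc.IH)
  also have "\<dots> = c ^ Suc j \<cdot>\<^sub>m ((if even j then 1\<^sub>m n else A) * A)"
  proof -
    have "(if even j then 1\<^sub>m n else A) \<in> carrier_mat n n" using A by simp
    then show ?thesis
      using A by (simp add: mult_smult_assoc_mat[of _ n n] mult_smult_distrib[of _ n n] smult_smult_mat)
  qed
  also have "\<dots> = c ^ Suc j \<cdot>\<^sub>m (if even (Suc j) then 1\<^sub>m n else A)"
    using A inv by auto
  finally show ?case .
qed

lemma mat_exp_smult_involution:
  fixes A :: "complex mat"
  assumes A: "A \<in> carrier_mat n n" and inv: "A * A = 1\<^sub>m n"
  shows "mat_exp (c \<cdot>\<^sub>m A) = cosh c \<cdot>\<^sub>m 1\<^sub>m n + sinh c \<cdot>\<^sub>m A"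
proof (rule eq_matI)
  fix i l assume "i < dim_row (cosh c \<cdot>\<^sub>m 1\<^sub>m n + sinh c \<cdot>\<^sub>m A)"
    "l < dim_col (cosh c \<cdot>\<^sub>m 1\<^sub>m n + sinh c \<cdot>\<^sub>m A)"
  then have il: "i < n" "l < n" using A by auto
  have entry: "((c \<cdot>\<^sub>m A) ^\<^sub>m j) $$ (i,l) / of_nat (fact j)
      = (if even j then c ^ j /\<^sub>R fact j else 0) * (1\<^sub>m n $$ (i,l))
        + (if even j then 0 else c ^ j /\<^sub>R fact j) * A $$ (i,l)" for j
    using A il by (simp add: pow_smult_involution[OF A inv] scaleR_conv_of_real field_simps)
  have "(\<lambda>j. ((c \<cdot>\<^sub>m A) ^\<^sub>m j) $$ (i,l) / of_nat (fact j))
      sums (cosh c * 1\<^sub>m n $$ (i,l) + sinh c * A $$ (i,l))"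
    unfolding entry by (intro sums_add sums_mult2 cosh_converges sinh_converges)
  then show "mat_exp (c \<cdot>\<^sub>m A) $$ (i,l) = (cosh c \<cdot>\<^sub>m 1\<^sub>m n + sinh c \<cdot>\<^sub>m A) $$ (i,l)"
    using A il by (simp add: mat_exp_def sums_iff)
qed (use A in \<open>auto simp: mat_exp_def\<close>)

lemma cosh_ii_times: "cosh (\<i> * complex_of_real \<theta>) = cos \<theta>"
  and sinh_ii_times: "sinh (\<i> * complex_of_real \<theta>) = \<i> * sin \<theta>"
  by (simp_all add: cosh_field_def sinh_field_def exp_minus cis_conv_exp[symmetric]
      complex_eq_iff cis.ctr)

text \<open>\<open>pauli_zx p q\<close> is \<open>p \<sigma>\<^sub>z + q \<sigma>\<^sub>x\<close>; for a unit vector \<open>(p, q)\<close>,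
  \<open>su2_rot \<theta> p q\<close> is \<open>exp (- \<i> \<theta> (p \<sigma>\<^sub>z + q \<sigma>\<^sub>x))\<close>.\<close>
definition pauli_zx :: "real \<Rightarrow> real \<Rightarrow> complex mat" where
  "pauli_zx p q = mat2 p q q (- p)"

definition su2_rot :: "real \<Rightarrow> real \<Rightarrow> real \<Rightarrow> complex mat" where
  "su2_rot \<theta> p q = mat2 (cos \<theta> - \<i> * sin \<theta> * p) (- \<i> * sin \<theta> * q)
                        (- \<i> * sin \<theta> * q) (cos \<theta> + \<i> * sin \<theta> * p)"
  for \<theta> :: real

lemma pauli_zx_mult_self:
  assumes "p\<^sup>2 + q\<^sup>2 = 1"
  shows "pauli_zx p q * pauli_zx p q = 1\<^sub>m 2"
proof -
  have "complex_of_real p * p + complex_of_real q * q = 1"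
    using arg_cong[OF assms, of complex_of_real] by (simp add: power2_eq_square)
  then show ?thesis
    by (simp add: pauli_zx_def mat2_mult one_mat_2 algebra_simps)
qed

lemma mat_exp_pauli_zx:
  assumes "p\<^sup>2 + q\<^sup>2 = 1"
  shows "mat_exp ((- \<i> * complex_of_real \<theta>) \<cdot>\<^sub>m pauli_zx p q) = su2_rot \<theta> p q"
proof -
  have "mat_exp ((- \<i> * complex_of_real \<theta>) \<cdot>\<^sub>m pauli_zx p q)
      = cosh (- \<i> * complex_of_real \<theta>) \<cdot>\<^sub>m 1\<^sub>m 2 + sinh (- \<i> * complex_of_real \<theta>) \<cdot>\<^sub>m pauli_zx p q"
    by (rule mat_exp_smult_involution[OF _ pauli_zx_mult_self[OF assms]])
      (simp add: pauli_zx_def mat2_carrier_mat)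
  then show ?thesis
    by (simp add: cosh_ii_times sinh_ii_times pauli_zx_def one_mat_2 smult_mat2
        add_mat2 su2_rot_def algebra_simps)
qed

lemma exp_evolution_pauli_zx:
  assumes "p\<^sup>2 + q\<^sup>2 = 1"
  shows "mat_exp ((- \<i> * complex_of_real t) \<cdot>\<^sub>m (complex_of_real w \<cdot>\<^sub>m pauli_zx p q))
    = su2_rot (t * w) p q"
  using mat_exp_pauli_zx[OF assms, of "t * w"] by (simp add: smult_smult_mat mult.assoc)

lemma mat_adjoint_su2_rot: "mat_adjoint (su2_rot \<theta> p q) = su2_rot (- \<theta>) p q"
  by (simp add: su2_rot_def mat_adjoint_mat2)

lemma cos_eigenvalue_su2_rot_mult:
  assumes "p\<^sup>2 + q\<^sup>2 = 1" "p'\<^sup>2 + q'\<^sup>2 = 1"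
    and "eigenvalue (su2_rot \<theta> p q * su2_rot \<theta>' p' q') (cis \<mu>)"
  shows "cos \<mu> = cos \<theta> * cos \<theta>' - sin \<theta> * sin \<theta>' * (p * p' + q * q')"
proof -
  have det: "(cos \<phi> - \<i> * sin \<phi> * x) * (cos \<phi> + \<i> * sin \<phi> * x) - (- \<i> * sin \<phi> * y) * (- \<i> * sin \<phi> * y) = 1"
    if "x\<^sup>2 + y\<^sup>2 = 1" for \<phi> x y :: real
  proof -
    have "(cos \<phi> - \<i> * sin \<phi> * x) * (cos \<phi> + \<i> * sin \<phi> * x) - (- \<i> * sin \<phi> * y) * (- \<i> * sin \<phi> * y)
        = complex_of_real ((cos \<phi>)\<^sup>2 + (sin \<phi>)\<^sup>2 * (x\<^sup>2 + y\<^sup>2))"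
      by (simp add: complex_eq_iff power2_eq_square algebra_simps)
    then show ?thesis using that by simp
  qed
  have tr: "(cos \<theta> - \<i> * sin \<theta> * p) * (cos \<theta>' - \<i> * sin \<theta>' * p') + (- \<i> * sin \<theta> * q) * (- \<i> * sin \<theta>' * q')
      + (- \<i> * sin \<theta> * q) * (- \<i> * sin \<theta>' * q') + (cos \<theta> + \<i> * sin \<theta> * p) * (cos \<theta>' + \<i> * sin \<theta>' * p')
      = 2 * complex_of_real (cos \<theta> * cos \<theta>' - sin \<theta> * sin \<theta>' * (p * p' + q * q'))"
    by (simp add: complex_eq_iff algebra_simps)
  from eigenvalue_mat2_mult[OF assms(3)[unfolded su2_rot_def]]
  have "(cis \<mu>)\<^sup>2 - 2 * complex_of_real (cos \<theta> * cos \<theta>' - sin \<theta> * sin \<theta>' * (p * p' + q * q')) * cis \<mu> + 1 = 0"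
    unfolding tr det[OF assms(1)] det[OF assms(2)] by simp
  from cis_root_of_reciprocal_quadratic[OF this] show ?thesis
    by (simp add: complex_eq_iff)
qed

lemma unit_vectors_inner_le_one:
  fixes p q p' q' :: real
  assumes "p\<^sup>2 + q\<^sup>2 = 1" "p'\<^sup>2 + q'\<^sup>2 = 1"
  shows "p * p' + q * q' \<le> 1"
proof -
  have "0 \<le> (p - p')\<^sup>2 + (q - q')\<^sup>2" by simp
  also have "\<dots> = (p\<^sup>2 + q\<^sup>2) + (p'\<^sup>2 + q'\<^sup>2) - 2 * (p * p' + q * q')"
    by (simp add: power2_eq_square algebra_simps)
  finally show ?thesis using assms by simp
qed

lemma sqrt_one_minus_square_mult:
  fixes p q p' q' :: real
  assumes "p\<^sup>2 + q\<^sup>2 = 1" "p'\<^sup>2 + q'\<^sup>2 = 1" "0 \<le> q" "0 \<le> q'"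
  shows "sqrt ((1 - p\<^sup>2) * (1 - p'\<^sup>2)) = q * q'"
proof -
  have "1 - p\<^sup>2 = q\<^sup>2" "1 - p'\<^sup>2 = q'\<^sup>2"
    using assms(1,2) by simp_all
  then have "(1 - p\<^sup>2) * (1 - p'\<^sup>2) = (q * q')\<^sup>2"
    by (simp add: power_mult_distrib)
  then show ?thesis using assms(3,4) by simp
qed

text \<open>The difference of the two sides is \<open>(1 - g) (1 - sin a sin b)\<close>.\<close>
lemma cos_diff_minus_defect_le:
  fixes a b g :: real
  assumes "g \<le> 1"
  shows "cos (a - b) - (1 - g) \<le> cos a * cos b + sin a * sin b * g"
proof -
  have "sin a * sin b \<le> 1"
    using abs_sin_le_one[of a] abs_sin_le_one[of b]
    by (metis abs_le_iff abs_mult mult_le_one abs_ge_zero)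
  then have "0 \<le> (1 - g) * (1 - sin a * sin b)"
    using assms by simp
  then show ?thesis
    by (simp add: cos_diff algebra_simps)
qed

lemma sin_qca_omega:
  assumes "0 \<le> m" "m \<le> 1"
  shows "sin (qca_omega k m) = sqrt (m\<^sup>2 + (qca_n m * sin k)\<^sup>2)"
proof -
  have n2: "(qca_n m)\<^sup>2 = 1 - m\<^sup>2" and n_le: "\<bar>qca_n m\<bar> \<le> 1"
    using assms by (auto simp: qca_n_def power_le_one real_sqrt_le_1_iff)
  then have "\<bar>qca_n m * cos k\<bar> \<le> 1"
    by (simp add: abs_mult mult_le_one abs_cos_le_one)
  then have "sin (qca_omega k m) = sqrt (1 - (qca_n m * cos k)\<^sup>2)"
    by (simp add: qca_omega_def sin_arccos_abs)
  also have "1 - (qca_n m * cos k)\<^sup>2 = m\<^sup>2 + (qca_n m * sin k)\<^sup>2"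
    by (simp add: power_mult_distrib cos_squared_eq n2 algebra_simps)
  finally show ?thesis .
qed

lemma qca_unit_vector:
  assumes "0 \<le> m" "m \<le> 1" "sin (qca_omega k m) \<noteq> 0"
  shows "(qca_v k m)\<^sup>2 + (m / sin (qca_omega k m))\<^sup>2 = 1"
proof -
  have "(sin (qca_omega k m))\<^sup>2 = (qca_n m * sin k)\<^sup>2 + m\<^sup>2"
    using sin_qca_omega[OF assms(1,2)] by simp
  moreover have "(sin (qca_omega k m))\<^sup>2 \<noteq> 0"
    using assms(3) by simp
  ultimately show ?thesis
    by (simp add: qca_v_def power_divide add_divide_distrib[symmetric])
qed

lemma dirac_unit_vector:
  assumes "(k, m) \<noteq> (0, 0)"
  shows "(dirac_v k m)\<^sup>2 + (m / dirac_omega k m)\<^sup>2 = 1"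
proof -
  have "0 < k\<^sup>2 + m\<^sup>2"
    using assms by (simp add: sum_power2_gt_zero_iff)
  then show ?thesis
    using assms by (simp add: dirac_v_def dirac_omega_def power_divide add_divide_distrib[symmetric])
qed

lemma qca_H_eq_pauli_zx:
  "qca_H k m = complex_of_real (qca_omega k m) \<cdot>\<^sub>m pauli_zx (- qca_v k m) (m / sin (qca_omega k m))"
  by (simp add: qca_H_def pauli_zx_def qca_v_def smult_mat2 field_simps)

lemma dirac_H_eq_pauli_zx:
  assumes "(k, m) \<noteq> (0, 0)"
  shows "dirac_H k m = complex_of_real (dirac_omega k m) \<cdot>\<^sub>m pauli_zx (- dirac_v k m) (m / dirac_omega k m)"
proof -
  have "dirac_omega k m \<noteq> 0"
    using assms by (simp add: dirac_omega_def sum_power2_eq_zero_iff)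
  then show ?thesis
    by (simp add: dirac_H_def pauli_zx_def dirac_v_def dirac_omega_def smult_mat2 field_simps)
qed

lemma V_mat_eq_su2_rot:
  assumes "0 \<le> m" "m \<le> 1" "(k, m) \<noteq> (0, 0)" "sin (qca_omega k m) \<noteq> 0"
  shows "V_mat k m t =
    su2_rot (t * dirac_omega k m) (- dirac_v k m) (m / dirac_omega k m) *
    su2_rot (- (t * qca_omega k m)) (- qca_v k m) (m / sin (qca_omega k m))"
proof -
  have "(- qca_v k m)\<^sup>2 + (m / sin (qca_omega k m))\<^sup>2 = 1"
    using qca_unit_vector[OF assms(1,2,4)] by simp
  moreover have "(- dirac_v k m)\<^sup>2 + (m / dirac_omega k m)\<^sup>2 = 1"
    using dirac_unit_vector[OF assms(3)] by simp
  ultimately show ?thesis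
    unfolding V_mat_def qca_U_def dirac_U_def qca_H_eq_pauli_zx dirac_H_eq_pauli_zx[OF assms(3)]
    by (simp only: exp_evolution_pauli_zx mat_adjoint_su2_rot)
qed

lemma beta_eq_one_minus_inner:
  assumes "0 \<le> m" "m \<le> 1" "(k, m) \<noteq> (0, 0)" "sin (qca_omega k m) \<noteq> 0"
  shows "beta k m = 1 - (qca_v k m * dirac_v k m + m / sin (qca_omega k m) * (m / dirac_omega k m))"
proof -
  have "0 \<le> m / sin (qca_omega k m)" "0 \<le> m / dirac_omega k m"
    using assms(1) sin_qca_omega[OF assms(1,2)] by (simp_all add: dirac_omega_def)
  then show ?thesis
    unfolding beta_def
    using sqrt_one_minus_square_mult[OF qca_unit_vector[OF assms(1,2,4)] dirac_unit_vector[OF assms(3)]]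
    by simp
qed

lemma cos_eigenvalue_V_mat:
  assumes "0 \<le> m" "m \<le> 1" "(k, m) \<noteq> (0, 0)" "sin (qca_omega k m) \<noteq> 0"
    and "eigenvalue (V_mat k m t) (cis \<mu>)"
  shows "cos \<mu> = cos (t * dirac_omega k m) * cos (t * qca_omega k m)
    + sin (t * dirac_omega k m) * sin (t * qca_omega k m)
      * (qca_v k m * dirac_v k m + m / sin (qca_omega k m) * (m / dirac_omega k m))"
proof -
  have "(- dirac_v k m)\<^sup>2 + (m / dirac_omega k m)\<^sup>2 = 1"
    using dirac_unit_vector[OF assms(3)] by simp
  moreover have "(- qca_v k m)\<^sup>2 + (m / sin (qca_omega k m))\<^sup>2 = 1"
    using qca_unit_vector[OF assms(1,2,4)] by simp
  moreover note assms(5)[unfolded V_mat_eq_su2_rot[OF assms(1-4)]]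
  ultimately have "cos \<mu> = cos (t * dirac_omega k m) * cos (- (t * qca_omega k m))
      - sin (t * dirac_omega k m) * sin (- (t * qca_omega k m))
        * ((- dirac_v k m) * (- qca_v k m) + m / dirac_omega k m * (m / sin (qca_omega k m)))"
    by (rule cos_eigenvalue_su2_rot_mult)
  then show ?thesis
    by (simp add: algebra_simps)
qed

theorem lemma1:
  fixes m k t \<mu> :: real
  assumes "0 \<le> m" "m \<le> 1"
    and "- pi \<le> k" "k \<le> pi"
    and "(k, m) \<noteq> (0, 0)"
    and "sin (qca_omega k m) \<noteq> 0"
    and "eigenvalue (V_mat k m t) (cis \<mu>)"
  shows "cos \<mu> \<ge> cos (alpha k m * t) - beta k m"
proof -
  define g where "g = qca_v k m * dirac_v k m + m / sin (qca_omega k m) * (m / dirac_omega k m)"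
  have "g \<le> 1"
    unfolding g_def
    by (rule unit_vectors_inner_le_one[OF qca_unit_vector[OF assms(1,2,6)] dirac_unit_vector[OF assms(5)]])
  moreover have "alpha k m * t = t * dirac_omega k m - t * qca_omega k m"
    by (simp add: alpha_def algebra_simps)
  ultimately show ?thesis
    using cos_diff_minus_defect_le[of g "t * dirac_omega k m" "t * qca_omega k m"]
      cos_eigenvalue_V_mat[OF assms(1,2,5,6,7)] beta_eq_one_minus_inner[OF assms(1,2,5,6)]
    by (simp add: g_def)
qed

end
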